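(* For all $e,f\in\mathsf{Exp}/{\sim}$ and $v_x\in V$, $\mathsf{bd}(\mu v_x.e,\mu v_x.f)\le\mathsf{bd}(e,f)$.
   Context: Fix variables $V=\{v_1,v_2,\dots\}$ and letters $\Sigma$. Expressions: $e\in\mathsf{Exp}::=0\mid v\ (v\in V)\mid a.e\mid e+f\mid\mu v.e$ ($\mu v$ binds $v$); substitution is capture-avoiding. The prechart $(\mathsf{Exp},\partial)$: least relations with $a.e\xrightarrow{a}e$; $v\rhd v$; $e+f$ has all transitions and outputs of $e$ and of $f$; $\mu w.e\rhd v$ if $e\rhd v$, $v\ne w$; $\mu v.e\xrightarrow{a}e'[\mu v.e/v]$ if $e\xrightarrow{a}e'$. Bisimilarity $\sim$ is a congruence; $\mathsf{Exp}/{\sim}$ is a prechart via $[e]\xrightarrow{a}[e']$ iff $e\xrightarrow{a}e'$, $[e]\rhd v$ iff $e\rhd v$, with $\beta([e])=\{(a,[e'])\mid e\xrightarrow{a}e'\}\cup\{v\mid e\rhd v\}$. A 1-bounded pseudometric on $X$ is $d:X\times X\to[0,1]$ with $d(x,x)=0$, symmetry, triangle inequality, ordered pointwise. $d^\uparrow$ on $\Sigma\times X+V$: $d^\uparrow((a,x),(a,y))=\tfrac12 d(x,y)$, $0$ if equal, $1$ otherwise. $\mathcal H(d)(A,B)=\max\{\sup_{x\in A}\inf_{y\in B}d(x,y),\sup_{y\in B}\inf_{x\in A}d(y,x)\}$, $\sup\emptyset=0$, $\inf\emptyset=1$. $\mathsf{bd}$ is the least fixpoint of $d\mapsto\big((x,y)\mapsto\mathcal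 H(d^\uparrow)(\beta(x),\beta(y))\big)$ on pseudometrics on $\mathsf{Exp}/{\sim}$. *)

theory Defs
  imports Complex_Main
begin

text \<open>Variables V = nat (v_1, v_2, ...); letters Sigma = type variable 'a.\<close>

datatype 'a exp = Zero | Var nat | Act 'a "'a exp" | Plus "'a exp" "'a exp" | Mu nat "'a exp"

fun fv :: "'a exp \<Rightarrow> nat set" where
  "fv Zero = {}"
| "fv (Var u) = {u}"
| "fv (Act a e) = fv e"
| "fv (Plus e f) = fv e \<union> fv f"
| "fv (Mu w e) = fv e - {w}"

fun vars :: "'a exp \<Rightarrow> nat set" where
  "vars Zero = {}"
| "vars (Var u) = {u}"
| "vars (Act a e) = vars e"
| "vars (Plus e f) = vars e \<union> vars f"
| "vars (Mu w e) = insert w (vars e)"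

text \<open>Renaming of free occurrences of w by z (used only with z fresh, hence no capture).\<close>
fun rn :: "nat \<Rightarrow> nat \<Rightarrow> 'a exp \<Rightarrow> 'a exp" where
  "rn w z Zero = Zero"
| "rn w z (Var u) = Var (if u = w then z else u)"
| "rn w z (Act a e) = Act a (rn w z e)"
| "rn w z (Plus e f) = Plus (rn w z e) (rn w z f)"
| "rn w z (Mu u e) = (if u = w then Mu u e else Mu u (rn w z e))"

lemma size_rn [simp]: "size (rn w z e) = size e"
  by (induction e) auto

definition fresh :: "nat set \<Rightarrow> nat" where
  "fresh S = Suc (Max S)"

text \<open>Capture-avoiding substitution: subst e g v = e[g/v].\<close>
function subst :: "'a exp \<Rightarrow> 'a exp \<Rightarrow> nat \<Rightarrow> 'a exp" where
  "subst Zero g v = Zero"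
| "subst (Var u) g v = (if u = v then g else Var u)"
| "subst (Act a e) g v = Act a (subst e g v)"
| "subst (Plus e f) g v = Plus (subst e g v) (subst f g v)"
| "subst (Mu w e) g v =
     (if w = v then Mu w e
      else if w \<notin> fv g then Mu w (subst e g v)
      else Mu (fresh (vars e \<union> fv g \<union> {v, w}))
              (subst (rn w (fresh (vars e \<union> fv g \<union> {v, w})) e) g v))"
  by pat_completeness auto
termination by (relation "measure (\<lambda>(e, g, v). size e)") auto

inductive step :: "'a exp \<Rightarrow> 'a \<Rightarrow> 'a exp \<Rightarrow> bool" where
  "step (Act a e) a e"
| "step e a e' \<Longrightarrow> step (Plus e f) a e'"
| "step f a f' \<Longrightarrow> step (Plus e f) a f'"
| "step e a e' \<Longrightarrow> step (Mu v e) a (subst e' (Mu v e) v)"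

inductive out :: "'a exp \<Rightarrow> nat \<Rightarrow> bool" where
  "out (Var v) v"
| "out e v \<Longrightarrow> out (Plus e f) v"
| "out f v \<Longrightarrow> out (Plus e f) v"
| "out e v \<Longrightarrow> v \<noteq> w \<Longrightarrow> out (Mu w e) v"

definition bisimulation :: "('a exp \<Rightarrow> 'a exp \<Rightarrow> bool) \<Rightarrow> bool" where
  "bisimulation R \<longleftrightarrow> (\<forall>x y. R x y \<longrightarrow>
      (\<forall>a x'. step x a x' \<longrightarrow> (\<exists>y'. step y a y' \<and> R x' y')) \<and>
      (\<forall>a y'. step y a y' \<longrightarrow> (\<exists>x'. step x a x' \<and> R x' y')) \<and>
      (\<forall>v. out x v \<longleftrightarrow> out y v))"

definition bisim :: "'a exp \<Rightarrow> 'a exp \<Rightarrow> bool" where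
  "bisim x y \<longleftrightarrow> (\<exists>R. bisimulation R \<and> R x y)"

lemma equivp_bisim: "equivp bisim"
proof (rule equivpI)
  show "reflp bisim"
    unfolding reflp_def bisim_def
    by (intro allI exI[of _ "(=)"]) (auto simp: bisimulation_def)
  show "symp bisim"
    unfolding symp_def bisim_def
  proof (intro allI impI)
    fix x y assume "\<exists>R. bisimulation R \<and> R x y"
    then obtain R where R: "bisimulation R" "R x y" by blast
    have "bisimulation (\<lambda>a b. R b a)"
      using R(1) unfolding bisimulation_def by blast
    then show "\<exists>R. bisimulation R \<and> R y x" using R(2) by blast
  qed
  show "transp bisim"
    unfolding transp_def bisim_def
  proof (intro allI impI)
    fix x y z assume "\<exists>R. bisimulation R \<and> R x y" "\<exists>R. bisimulation R \<and> R y z"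
    then obtain R S where R: "bisimulation R" "R x y" and S: "bisimulation S" "S y z" by blast
    have "bisimulation (R OO S)"
      unfolding bisimulation_def
    proof (rule allI, rule allI, rule impI)
      fix u w assume "(R OO S) u w"
      then obtain m where "R u m" "S m w" by blast
      note r = R(1)[unfolded bisimulation_def, rule_format, OF \<open>R u m\<close>]
      note s = S(1)[unfolded bisimulation_def, rule_format, OF \<open>S m w\<close>]
      show "(\<forall>a x'. step u a x' \<longrightarrow> (\<exists>y'. step w a y' \<and> (R OO S) x' y')) \<and>
            (\<forall>a y'. step w a y' \<longrightarrow> (\<exists>x'. step u a x' \<and> (R OO S) x' y')) \<and>
            (\<forall>v. out u v \<longleftrightarrow> out w v)"
        using r s by (meson relcomppI)
    qed
    then show "\<exists>R. bisimulation R \<and> R x z" using R(2) S(2) by blast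
  qed
qed

quotient_type 'a qexp = "'a exp" / bisim
  by (rule equivp_bisim)

definition beta :: "'a qexp \<Rightarrow> ('a \<times> 'a qexp + nat) set" where
  "beta C = {Inl (a, abs_qexp e') | a e'. step (rep_qexp C) a e'}
          \<union> {Inr v | v. out (rep_qexp C) v}"

definition pseudometric :: "('x \<Rightarrow> 'x \<Rightarrow> real) \<Rightarrow> bool" where
  "pseudometric d \<longleftrightarrow> (\<forall>x y. 0 \<le> d x y \<and> d x y \<le> 1) \<and> (\<forall>x. d x x = 0) \<and>
     (\<forall>x y. d x y = d y x) \<and> (\<forall>x y z. d x z \<le> d x y + d y z)"

fun dup :: "('x \<Rightarrow> 'x \<Rightarrow> real) \<Rightarrow> ('a \<times> 'x + nat) \<Rightarrow> ('a \<times> 'x + nat) \<Rightarrow> real" where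
  "dup d (Inl (a, x)) (Inl (b, y)) = (if a = b then d x y / 2 else 1)"
| "dup d (Inr v) (Inr w) = (if v = w then 0 else 1)"
| "dup d _ _ = 1"

definition supz :: "real set \<Rightarrow> real" where
  "supz S = (if S = {} then 0 else Sup S)"

definition infz :: "real set \<Rightarrow> real" where
  "infz S = (if S = {} then 1 else Inf S)"

definition hausdorff :: "('y \<Rightarrow> 'y \<Rightarrow> real) \<Rightarrow> 'y set \<Rightarrow> 'y set \<Rightarrow> real" where
  "hausdorff d A B = max (supz ((\<lambda>x. infz ((\<lambda>y. d x y) ` B)) ` A))
                         (supz ((\<lambda>y. infz ((\<lambda>x. d y x) ` A)) ` B))"

definition Phi :: "('a qexp \<Rightarrow> 'a qexp \<Rightarrow> real) \<Rightarrow> 'a qexp \<Rightarrow> 'a qexp \<Rightarrow> real" where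
  "Phi d x y = hausdorff (dup d) (beta x) (beta y)"

definition bd :: "'a qexp \<Rightarrow> 'a qexp \<Rightarrow> real" where
  "bd = (THE d. pseudometric d \<and> Phi d = d \<and>
                (\<forall>d'. pseudometric d' \<and> Phi d' = d' \<longrightarrow> d \<le> d'))"

end

theory Submission
  imports Defs "HOL-Combinatorics.Transposition"
begin

text \<open>Since \<^const>\<open>Phi\<close> halves uniform distances, \<^const>\<open>bd\<close> is its unique
  fixed point among \<open>[0,1]\<close>-valued functions and lies below every \<open>D\<close> with
  \<open>Phi D \<le> D\<close>. Take \<open>bd_upto X Y\<close> to be the minimum of \<open>bd X Y\<close> and of
  \<open>max (bd g h) (bd e f)\<close> over all ways of writing \<open>X\<close>, \<open>Y\<close> as unfoldings
  \<open>g[\<mu>v.e/v]\<close>, \<open>h[\<mu>v.f/v]\<close>. A transition of \<open>g[\<mu>v.e/v]\<close> either comes from a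
  transition \<open>g \<rightarrow> g'\<close>, or, if \<open>g\<close> outputs \<open>v\<close>, from a transition \<open>e \<rightarrow> e'\<close> of the
  unfolded \<open>\<mu>v.e\<close>; its target is again an unfolding, \<open>g'[\<mu>v.e/v]\<close> or \<open>e'[\<mu>v.e/v]\<close>,
  and the matching transition of \<open>h\<close> or \<open>f\<close> yields a matching unfolding on the other
  side. This gives \<open>Phi bd_upto \<le> bd_upto\<close>, and \<open>g = h = v\<close> gives the theorem.

  Substitution renames bound variables, so the targets agree with these unfoldings only up to
  \<open>\<alpha>\<close>-equivalence; a locally nameless representation shows that \<open>\<alpha>\<close>-equivalent
  expressions are bisimilar.\<close>

section \<open>Locally nameless expressions\<close>

text \<open>Bound variables are de Bruijn indices, free variables are names. Expressions that differ
  only in the fresh names chosen by \<^const>\<open>subst\<close> get the same representation, and the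
  transition relation \<open>lstep\<close> below mirrors \<^const>\<open>step\<close> on representations.\<close>

datatype 'a lexp =
  LZero | LFree nat | LBound nat | LAct 'a "'a lexp" | LPlus "'a lexp" "'a lexp" | LMu "'a lexp"

fun lfv :: "'a lexp \<Rightarrow> nat set" where
  "lfv LZero = {}"
| "lfv (LFree u) = {u}"
| "lfv (LBound i) = {}"
| "lfv (LAct a T) = lfv T"
| "lfv (LPlus S T) = lfv S \<union> lfv T"
| "lfv (LMu T) = lfv T"

fun lout :: "'a lexp \<Rightarrow> nat set" where
  "lout LZero = {}"
| "lout (LFree u) = {u}"
| "lout (LBound i) = {}"
| "lout (LAct a T) = {}"
| "lout (LPlus S T) = lout S \<union> lout T"
| "lout (LMu T) = lout T"

fun lsubst :: "'a lexp \<Rightarrow> 'a lexp \<Rightarrow> nat \<Rightarrow> 'a lexp" where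
  "lsubst LZero K x = LZero"
| "lsubst (LFree u) K x = (if u = x then K else LFree u)"
| "lsubst (LBound i) K x = LBound i"
| "lsubst (LAct a T) K x = LAct a (lsubst T K x)"
| "lsubst (LPlus S T) K x = LPlus (lsubst S K x) (lsubst T K x)"
| "lsubst (LMu T) K x = LMu (lsubst T K x)"

fun lopen :: "nat \<Rightarrow> nat \<Rightarrow> 'a lexp \<Rightarrow> 'a lexp" where
  "lopen n x LZero = LZero"
| "lopen n x (LFree u) = LFree u"
| "lopen n x (LBound i) = (if i = n then LFree x else LBound i)"
| "lopen n x (LAct a T) = LAct a (lopen n x T)"
| "lopen n x (LPlus S T) = LPlus (lopen n x S) (lopen n x T)"
| "lopen n x (LMu T) = LMu (lopen (Suc n) x T)"

fun lclosed :: "nat \<Rightarrow> 'a lexp \<Rightarrow> bool" where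
  "lclosed n LZero = True"
| "lclosed n (LFree u) = True"
| "lclosed n (LBound i) = (i < n)"
| "lclosed n (LAct a T) = lclosed n T"
| "lclosed n (LPlus S T) = (lclosed n S \<and> lclosed n T)"
| "lclosed n (LMu T) = lclosed (Suc n) T"

fun lswap :: "nat \<Rightarrow> nat \<Rightarrow> 'a lexp \<Rightarrow> 'a lexp" where
  "lswap x y LZero = LZero"
| "lswap x y (LFree u) = LFree (transpose x y u)"
| "lswap x y (LBound i) = LBound i"
| "lswap x y (LAct a T) = LAct a (lswap x y T)"
| "lswap x y (LPlus S T) = LPlus (lswap x y S) (lswap x y T)"
| "lswap x y (LMu T) = LMu (lswap x y T)"

inductive lstep :: "'a lexp \<Rightarrow> 'a \<Rightarrow> 'a lexp \<Rightarrow> bool" where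
  lstep_act: "lstep (LAct a T) a T"
| lstep_plus1: "lstep S a S' \<Longrightarrow> lstep (LPlus S T) a S'"
| lstep_plus2: "lstep T a T' \<Longrightarrow> lstep (LPlus S T) a T'"
| lstep_mu: "lstep (lopen 0 x E) a T \<Longrightarrow> x \<notin> lfv E \<Longrightarrow> lstep (LMu E) a (lsubst T (LMu E) x)"

inductive_simps lstep_simps [simp]:
  "lstep LZero a T" "lstep (LFree u) a T" "lstep (LBound i) a T" "lstep (LAct b S) a T"
  "lstep (LPlus S S') a T"

lemma finite_lfv [simp]: "finite (lfv T)"
  by (induction T) auto

lemma size_lopen [simp]: "size (lopen n x T) = size T"
  by (induction T arbitrary: n) auto

lemma lopen_lclosed: "lclosed n T \<Longrightarrow> n \<le> m \<Longrightarrow> lopen m x T = T"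
  by (induction T arbitrary: n m) auto

lemma lopen_lsubst: "lclosed 0 K \<Longrightarrow> x \<noteq> v \<Longrightarrow> lopen n x (lsubst E K v) = lsubst (lopen n x E) K v"
  by (induction E arbitrary: n) (auto simp: lopen_lclosed)

lemma lfv_lopen: "lfv (lopen n x E) \<subseteq> insert x (lfv E)"
  by (induction E arbitrary: n) auto

lemma lout_lopen_subset: "lout (lopen n x E) \<subseteq> insert x (lout E)"
  by (induction E arbitrary: n) auto

lemma lout_subset_lopen: "lout E \<subseteq> lout (lopen n x E)"
  by (induction E arbitrary: n) auto

lemma lfv_lsubst: "lfv (lsubst T K x) \<subseteq> (lfv T - {x}) \<union> lfv K"
  by (induction T) auto

lemma lsubst_nonfree: "x \<notin> lfv T \<Longrightarrow> lsubst T K x = T"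
  by (induction T) auto

lemma lsubst_lsubst_commute:
  "y \<noteq> v \<Longrightarrow> y \<notin> lfv K \<Longrightarrow> lsubst (lsubst T M y) K v = lsubst (lsubst T K v) (lsubst M K v) y"
  by (induction T) (auto simp: lsubst_nonfree)

lemma lout_lsubst: "lout (lsubst T K v) = (lout T - {v}) \<union> (if v \<in> lout T then lout K else {})"
  by (induction T) auto

lemma lswap_lopen: "lswap x y (lopen n z T) = lopen n (transpose x y z) (lswap x y T)"
  by (induction T arbitrary: n) auto

lemma lswap_lsubst: "lswap x y (lsubst T M z) = lsubst (lswap x y T) (lswap x y M) (transpose x y z)"
  by (induction T) (auto simp: transpose_eq_iff)

lemma lfv_lswap: "lfv (lswap x y T) = transpose x y ` lfv T"
  by (induction T) auto

lemma lswap_nonfree: "x \<notin> lfv T \<Longrightarrow> y \<notin> lfv T \<Longrightarrow> lswap x y T = T"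
  by (induction T) (auto simp: transpose_def)

lemma lswap_same [simp]: "lswap x x T = T"
  by (induction T) auto

lemma lsubst_lswap: "y \<notin> lfv T \<Longrightarrow> lsubst (lswap x y T) M y = lsubst T M x"
  by (induction T) (auto simp: transpose_def)

lemma lstep_lswap: "lstep T a T' \<Longrightarrow> lstep (lswap x y T) a (lswap x y T')"
proof (induction rule: lstep.induct)
  case (lstep_mu z E a T)
  have "lstep (lopen 0 (transpose x y z) (lswap x y E)) a (lswap x y T)"
    using lstep_mu.IH by (simp add: lswap_lopen)
  moreover have "transpose x y z \<notin> lfv (lswap x y E)"
    using lstep_mu.hyps(2) by (auto simp: lfv_lswap transpose_eq_iff)
  ultimately show ?case
    by (simp add: lswap_lsubst lstep.lstep_mu)
qed (auto intro: lstep.intros)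

lemma lstep_lfv: "lstep T a T' \<Longrightarrow> lfv T' \<subseteq> lfv T"
proof (induction rule: lstep.induct)
  case (lstep_mu x E a T)
  then show ?case using lfv_lsubst[of T "LMu E" x] lfv_lopen[of 0 x E] by auto
qed auto

lemma lstep_LMu_fresh:
  assumes "lstep (LMu E) a T" "finite S"
  obtains y T' where "y \<notin> S" "y \<notin> lfv E" "lstep (lopen 0 y E) a T'" "T = lsubst T' (LMu E) y"
proof -
  from assms(1) obtain x T0 where x: "lstep (lopen 0 x E) a T0" "x \<notin> lfv E" "T = lsubst T0 (LMu E) x"
    by (cases rule: lstep.cases) auto
  obtain y where y: "y \<notin> S \<union> lfv E \<union> lfv T0 \<union> {x}"
    using ex_new_if_finite[OF infinite_UNIV_nat, of "S \<union> lfv E \<union> lfv T0 \<union> {x}"] assms(2) by auto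
  have "lstep (lswap x y (lopen 0 x E)) a (lswap x y T0)"
    using x(1) by (rule lstep_lswap)
  moreover have "lswap x y (lopen 0 x E) = lopen 0 y E"
    using x(2) y by (simp add: lswap_lopen lswap_nonfree)
  ultimately have "lstep (lopen 0 y E) a (lswap x y T0)" by simp
  moreover have "T = lsubst (lswap x y T0) (LMu E) y"
    using x(3) y by (simp add: lsubst_lswap)
  ultimately show thesis using that y x(2) by blast
qed

lemma lstep_lsubst: "lstep T a T' \<Longrightarrow> lclosed 0 K \<Longrightarrow> lstep (lsubst T K v) a (lsubst T' K v)"
proof (induction T arbitrary: T' rule: measure_induct_rule[of size])
  case (less T)
  from less.prems(1) show ?case
  proof (cases rule: lstep.cases)
    case (lstep_mu x E T0)
    obtain y T1 where y: "y \<notin> insert v (lfv K)" "y \<notin> lfv E" "lstep (lopen 0 y E) a T1"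
      "T' = lsubst T1 (LMu E) y"
      using lstep_LMu_fresh[of E a T' "insert v (lfv K)"] less.prems lstep_mu by auto
    have "lstep (lsubst (lopen 0 y E) K v) a (lsubst T1 K v)"
      using less.IH[of "lopen 0 y E"] lstep_mu y less.prems by auto
    then have "lstep (lopen 0 y (lsubst E K v)) a (lsubst T1 K v)"
      using y less.prems by (simp add: lopen_lsubst)
    moreover have "y \<notin> lfv (lsubst E K v)"
      using y lfv_lsubst[of E K v] by auto
    ultimately have "lstep (LMu (lsubst E K v)) a (lsubst (lsubst T1 K v) (LMu (lsubst E K v)) y)"
      by (rule lstep.lstep_mu)
    then show ?thesis
      using lstep_mu(1) y(1,4) by (simp add: lsubst_lsubst_commute)
  qed (use less in \<open>auto intro: lstep.intros\<close>)
qed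

lemma lstep_lsubstD:
  "lstep (lsubst T K v) a T' \<Longrightarrow> lclosed 0 K \<Longrightarrow>
   (\<exists>T''. lstep T a T'' \<and> T' = lsubst T'' K v) \<or> (v \<in> lout T \<and> lstep K a T')"
proof (induction T arbitrary: T' rule: measure_induct_rule[of size])
  case (less T)
  show ?case
  proof (cases T)
    case (LPlus S1 S2)
    then show ?thesis
      using less.IH[of S1 T'] less.IH[of S2 T'] less.prems by (auto intro: lstep.intros)
  next
    case (LMu E)
    from less.prems(1) LMu have "lstep (LMu (lsubst E K v)) a T'" by simp
    then obtain y T1 where y: "y \<notin> insert v (lfv K \<union> lfv E)" "y \<notin> lfv (lsubst E K v)"
      "lstep (lopen 0 y (lsubst E K v)) a T1" "T' = lsubst T1 (LMu (lsubst E K v)) y"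
      by (rule lstep_LMu_fresh[where S = "insert v (lfv K \<union> lfv E)"]) auto
    have "lstep (lsubst (lopen 0 y E) K v) a T1"
      using y less.prems by (simp add: lopen_lsubst)
    with less.IH[of "lopen 0 y E" T1] LMu less.prems(2)
    consider (body) T2 where "lstep (lopen 0 y E) a T2" "T1 = lsubst T2 K v"
      | (out) "v \<in> lout (lopen 0 y E)" "lstep K a T1"
      by auto
    then show ?thesis
    proof cases
      case body
      then have "lstep (LMu E) a (lsubst T2 (LMu E) y)"
        using y by (auto intro: lstep.lstep_mu)
      moreover have "T' = lsubst (lsubst T2 (LMu E) y) K v"
        using y body by (simp add: lsubst_lsubst_commute)
      ultimately show ?thesis using LMu by blast
    next
      case out
      then have "v \<in> lout E"
        using lout_lopen_subset[of 0 y E] y by auto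
      moreover have "y \<notin> lfv T1"
        using y out lstep_lfv[of K a T1] by auto
      then have "T' = T1"
        using y(4) by (simp add: lsubst_nonfree)
      ultimately show ?thesis using LMu out by auto
    qed
  qed (use less.prems in \<open>auto split: if_splits\<close>)
qed

lemma lstep_lsubst_out: "v \<in> lout T \<Longrightarrow> lstep K a T' \<Longrightarrow> lclosed 0 K \<Longrightarrow> lstep (lsubst T K v) a T'"
proof (induction T rule: measure_induct_rule[of size])
  case (less T)
  show ?case
  proof (cases T)
    case (LMu E)
    obtain y where y: "y \<notin> insert v (lfv K \<union> lfv E)"
      using ex_new_if_finite[OF infinite_UNIV_nat, of "insert v (lfv K \<union> lfv E)"] by auto
    have "v \<in> lout (lopen 0 y E)"
      using less.prems LMu lout_subset_lopen[of E 0 y] by auto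
    then have "lstep (lopen 0 y (lsubst E K v)) a T'"
      using less LMu y by (simp add: lopen_lsubst)
    moreover have "y \<notin> lfv (lsubst E K v)"
      using y lfv_lsubst[of E K v] by auto
    ultimately have "lstep (LMu (lsubst E K v)) a (lsubst T' (LMu (lsubst E K v)) y)"
      by (rule lstep.lstep_mu)
    moreover have "y \<notin> lfv T'"
      using y lstep_lfv[OF less.prems(2)] by auto
    ultimately show ?thesis
      using LMu by (simp add: lsubst_nonfree)
  qed (use less in \<open>auto intro: lstep.intros\<close>)
qed


section \<open>Named expressions and their locally nameless form\<close>

fun binder_index :: "nat list \<Rightarrow> nat \<Rightarrow> nat option" where
  "binder_index [] u = None"
| "binder_index (x # xs) u = (if x = u then Some 0 else map_option Suc (binder_index xs u))"

text \<open>\<open>lexp_of e G\<close> is the representation of \<open>e\<close> under the stack \<open>G\<close> of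
  enclosing binders, innermost first.\<close>

fun lexp_of :: "'a exp \<Rightarrow> nat list \<Rightarrow> 'a lexp" where
  "lexp_of Zero G = LZero"
| "lexp_of (Var u) G = (case binder_index G u of None \<Rightarrow> LFree u | Some i \<Rightarrow> LBound i)"
| "lexp_of (Act a e) G = LAct a (lexp_of e G)"
| "lexp_of (Plus e f) G = LPlus (lexp_of e G) (lexp_of f G)"
| "lexp_of (Mu w e) G = LMu (lexp_of e (w # G))"

lemma binder_index_None: "binder_index G u = None \<longleftrightarrow> u \<notin> set G"
  by (induction G) auto

lemma binder_index_Some_in: "binder_index G u = Some i \<Longrightarrow> u \<in> set G"
  by (metis binder_index_None option.distinct(1))

lemma binder_index_Some_less: "binder_index G u = Some i \<Longrightarrow> i < length G"
  by (induction G arbitrary: i) (auto split: if_splits)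

lemma binder_index_append:
  "binder_index (G @ [v]) u =
     (if u \<in> set G then binder_index G u else if u = v then Some (length G) else None)"
  by (induction G) (auto simp: binder_index_None)

lemma fv_subset_vars: "fv e \<subseteq> vars e"
  by (induction e) auto

lemma finite_vars [simp]: "finite (vars e)"
  by (induction e) auto

lemma finite_fv [simp]: "finite (fv e)"
  using finite_subset[OF fv_subset_vars] by simp

lemma fresh_greater: "finite S \<Longrightarrow> x \<in> S \<Longrightarrow> x < fresh S"
  unfolding fresh_def by (simp add: le_imp_less_Suc)

lemma lfv_lexp_of: "lfv (lexp_of e G) = {u \<in> fv e. binder_index G u = None}"
  by (induction e arbitrary: G) (auto split: option.splits)

lemma lclosed_lexp_of: "lclosed (length G) (lexp_of e G)"
proof (induction e arbitrary: G)
  case (Mu w e)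
  then show ?case using Mu.IH[of "w # G"] by simp
qed (auto split: option.splits dest: binder_index_Some_less)

lemma lexp_of_cong: "\<forall>u\<in>fv e. binder_index G u = binder_index D u \<Longrightarrow> lexp_of e G = lexp_of e D"
proof (induction e arbitrary: G D)
  case (Act a e)
  then show ?case using Act.IH[of G D] by simp
next
  case (Plus e f)
  then show ?case using Plus.IH(1)[of G D] Plus.IH(2)[of G D] by simp
next
  case (Mu w e)
  then show ?case using Mu.IH[of "w # G" "w # D"] by simp
qed simp_all

lemma lexp_of_rn:
  assumes "z \<notin> vars e" "binder_index G' z = binder_index G w" "binder_index G w \<noteq> None"
    and "\<And>u. u \<in> fv e \<Longrightarrow> u \<noteq> w \<Longrightarrow> binder_index G' u = binder_index G u"
  shows "lexp_of (rn w z e) G' = lexp_of e G"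
  using assms
proof (induction e arbitrary: G G')
  case (Var u)
  show ?case
  proof (cases "u = w")
    case True
    then show ?thesis using Var.prems(2,3) by (auto split: option.splits)
  next
    case False
    then show ?thesis using Var.prems(4)[of u] by simp
  qed
next
  case (Mu u e)
  show ?case
  proof (cases "u = w")
    case True
    then have "lexp_of (Mu w e) G' = lexp_of (Mu w e) G"
      using Mu.prems(4) by (intro lexp_of_cong) auto
    then show ?thesis using True by simp
  next
    case False
    have "lexp_of (rn w z e) (u # G') = lexp_of e (u # G)"
      by (rule Mu.IH) (use Mu.prems False in auto)
    then show ?thesis using False by simp
  qed
qed auto

lemma subst_Mu_bound: "subst (Mu v e) k v = Mu v e"
  by (subst subst.simps) simp

lemma subst_Mu_nonfree: "w \<noteq> v \<Longrightarrow> w \<notin> fv k \<Longrightarrow> subst (Mu w e) k v = Mu w (subst e k v)"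
  by (subst subst.simps) simp

lemma subst_Mu_rename:
  "w \<noteq> v \<Longrightarrow> w \<in> fv k \<Longrightarrow> z = fresh (vars e \<union> fv k \<union> {v, w}) \<Longrightarrow>
   subst (Mu w e) k v = Mu z (subst (rn w z e) k v)"
  by (subst subst.simps) simp

declare subst.simps(5) [simp del]

lemma lexp_of_subst:
  "binder_index G v = None \<Longrightarrow> (\<And>u. u \<in> fv k \<Longrightarrow> binder_index G u = None) \<Longrightarrow>
   lexp_of (subst g k v) G = lsubst (lexp_of g G) (lexp_of k []) v"
proof (induction g k v arbitrary: G rule: subst.induct)
  case (2 u k v)
  then show ?case by (auto split: option.splits intro!: lexp_of_cong)
next
  case (5 w e k v)
  consider "w = v" | "w \<noteq> v" "w \<notin> fv k" | "w \<noteq> v" "w \<in> fv k" by blast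
  then show ?case
  proof cases
    case 1
    then have "v \<notin> lfv (lexp_of e (w # G))" by (simp add: lfv_lexp_of)
    then show ?thesis using 1 by (simp add: subst_Mu_bound lsubst_nonfree)
  next
    case 2
    have "lexp_of (subst e k v) (w # G) = lsubst (lexp_of e (w # G)) (lexp_of k []) v"
      by (rule "5.IH"(1)) (use 2 "5.prems" in auto)
    then show ?thesis using 2 by (simp add: subst_Mu_nonfree)
  next
    case 3
    define z where "z = fresh (vars e \<union> fv k \<union> {v, w})"
    have "x < z" if "x \<in> vars e \<union> fv k \<union> {v, w}" for x
      using fresh_greater[OF _ that] unfolding z_def by simp
    then have z: "z \<notin> vars e" "z \<noteq> v" "z \<noteq> w" "z \<notin> fv k"
      by auto
    have "lexp_of (subst (rn w z e) k v) (z # G) = lsubst (lexp_of (rn w z e) (z # G)) (lexp_of k []) v"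
      by (rule "5.IH"(2)[OF 3(1), folded z_def]) (use 3 z "5.prems" in auto)
    moreover have "lexp_of (rn w z e) (z # G) = lexp_of e (w # G)"
      by (rule lexp_of_rn) (use z fv_subset_vars[of e] in auto)
    ultimately show ?thesis
      using subst_Mu_rename[OF 3 z_def] by simp
  qed
qed auto

lemma lexp_of_subst_Nil: "lexp_of (subst g k v) [] = lsubst (lexp_of g []) (lexp_of k []) v"
  by (simp add: lexp_of_subst)

lemma lopen_lexp_of: "lopen (length G) v (lexp_of e (G @ [v])) = lexp_of e G"
proof (induction e arbitrary: G)
  case (Var u)
  then show ?case
    by (auto simp: binder_index_append binder_index_None split: option.splits
        dest: binder_index_Some_less binder_index_Some_in)
next
  case (Mu w e)
  then show ?case using Mu.IH[of "w # G"] by simp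
qed auto

lemma lopen_lexp_of_Mu: "lopen 0 v (lexp_of e [v]) = lexp_of e []"
  using lopen_lexp_of[of "[]" v e] by simp

inductive_simps out_simps [simp]:
  "out Zero w" "out (Var u) w" "out (Act a e) w" "out (Plus e f) w" "out (Mu u e) w"

inductive_cases step_MuE: "step (Mu v e) a y"

lemma lout_lexp_of: "w \<in> lout (lexp_of g G) \<longleftrightarrow> out g w \<and> binder_index G w = None"
  by (induction g arbitrary: G) (auto split: option.splits)

lemma out_iff_lout: "out g w \<longleftrightarrow> w \<in> lout (lexp_of g [])"
  by (simp add: lout_lexp_of)

lemma lclosed_lexp_of_Nil: "lclosed 0 (lexp_of k [])"
  using lclosed_lexp_of[of "[]" k] by simp

lemma step_lstep: "step g a g' \<Longrightarrow> lstep (lexp_of g []) a (lexp_of g' [])"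
proof (induction rule: step.induct)
  case (4 e a e' v)
  then have "lstep (lopen 0 v (lexp_of e [v])) a (lexp_of e' [])"
    by (simp add: lopen_lexp_of_Mu)
  moreover have "v \<notin> lfv (lexp_of e [v])"
    by (simp add: lfv_lexp_of)
  ultimately show ?case
    by (simp add: lexp_of_subst lstep.lstep_mu)
qed (auto intro: lstep.intros)

lemma lstep_step: "lstep (lexp_of g []) a T \<Longrightarrow> \<exists>g'. step g a g' \<and> T = lexp_of g' []"
proof (induction g arbitrary: T)
  case (Var u)
  then show ?case by (auto split: option.splits)
next
  case (Act b e)
  then have "a = b" "T = lexp_of e []" by auto
  then show ?case by (auto intro!: exI[of _ e] step.intros(1))
next
  case (Plus e f)
  then consider "lstep (lexp_of e []) a T" | "lstep (lexp_of f []) a T" by auto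
  then show ?case using Plus.IH by cases (blast intro: step.intros)+
next
  case (Mu v e)
  define E where "E = lexp_of e [v]"
  from Mu.prems have "lstep (LMu E) a T" by (simp add: E_def)
  then obtain x T' where x: "lstep (lopen 0 x E) a T'" "x \<notin> lfv E" "T = lsubst T' (LMu E) x"
    by (cases rule: lstep.cases) auto
  have vE: "v \<notin> lfv E"
    unfolding E_def by (simp add: lfv_lexp_of)
  \<comment> \<open>the body was opened at some fresh \<open>x\<close>; swapping \<open>x\<close> and \<open>v\<close> turns it into \<open>e\<close>\<close>
  have "lstep (lswap x v (lopen 0 x E)) a (lswap x v T')"
    using x(1) by (rule lstep_lswap)
  moreover have "lswap x v (lopen 0 x E) = lexp_of e []"
    using x(2) vE by (simp add: lswap_lopen lswap_nonfree E_def lopen_lexp_of_Mu)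
  ultimately obtain e' where e': "step e a e'" "lswap x v T' = lexp_of e' []"
    using Mu.IH by fastforce
  have "v \<notin> lfv T' \<or> v = x"
    using lstep_lfv[OF x(1)] lfv_lopen[of 0 x E] vE by auto
  then have "lsubst (lswap x v T') (LMu E) v = T"
    using x(3) by (auto simp: lsubst_lswap)
  then have "lexp_of (subst e' (Mu v e) v) [] = T"
    using e'(2) by (simp add: lexp_of_subst E_def)
  moreover have "step (Mu v e) a (subst e' (Mu v e) v)"
    using e'(1) by (rule step.intros(4))
  ultimately show ?case by (intro exI[of _ "subst e' (Mu v e) v"]) simp
qed simp

lemma bisim_if_lexp_of_eq:
  assumes "lexp_of x [] = lexp_of y []"
  shows "bisim x y"
proof -
  define R where "R = (\<lambda>x y :: 'a exp. lexp_of x [] = lexp_of y [])"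
  have "bisimulation R"
    unfolding bisimulation_def
  proof (intro allI impI conjI)
    fix p q a p'
    assume "R p q" "step p a p'"
    then show "\<exists>q'. step q a q' \<and> R p' q'"
      unfolding R_def by (metis step_lstep lstep_step)
  next
    fix p q a q'
    assume "R p q" "step q a q'"
    then show "\<exists>p'. step p a p' \<and> R p' q'"
      unfolding R_def by (metis step_lstep lstep_step)
  next
    fix p q v
    assume "R p q"
    then show "out p v \<longleftrightarrow> out q v"
      unfolding R_def by (simp add: out_iff_lout)
  qed
  then show ?thesis
    using assms unfolding bisim_def R_def by blast
qed

lemma abs_qexp_eq_if_lexp_of_eq: "lexp_of x [] = lexp_of y [] \<Longrightarrow> abs_qexp x = abs_qexp y"
  by (simp add: bisim_if_lexp_of_eq qexp.abs_eq_iff)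

lemma step_substD:
  assumes "step (subst g k v) a x"
  shows "(\<exists>g'. step g a g' \<and> abs_qexp x = abs_qexp (subst g' k v)) \<or>
    (out g v \<and> (\<exists>y. step k a y \<and> abs_qexp x = abs_qexp y))"
proof -
  have "lstep (lsubst (lexp_of g []) (lexp_of k []) v) a (lexp_of x [])"
    using step_lstep[OF assms] by (simp only: lexp_of_subst_Nil)
  from lstep_lsubstD[OF this lclosed_lexp_of_Nil] show ?thesis
  proof
    assume "\<exists>T. lstep (lexp_of g []) a T \<and> lexp_of x [] = lsubst T (lexp_of k []) v"
    then obtain g' where "step g a g'" "lexp_of x [] = lexp_of (subst g' k v) []"
      by (auto simp: lexp_of_subst_Nil dest: lstep_step)
    then show ?thesis by (blast intro: abs_qexp_eq_if_lexp_of_eq)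
  next
    assume "v \<in> lout (lexp_of g []) \<and> lstep (lexp_of k []) a (lexp_of x [])"
    then show ?thesis
      by (auto simp: out_iff_lout dest!: lstep_step intro: abs_qexp_eq_if_lexp_of_eq)
  qed
qed

lemma step_subst:
  assumes "step g a g'"
  shows "\<exists>x. step (subst g k v) a x \<and> abs_qexp x = abs_qexp (subst g' k v)"
proof -
  have "lstep (lexp_of (subst g k v) []) a (lexp_of (subst g' k v) [])"
    unfolding lexp_of_subst_Nil using step_lstep[OF assms] lclosed_lexp_of_Nil by (rule lstep_lsubst)
  then obtain x where x: "step (subst g k v) a x" "lexp_of (subst g' k v) [] = lexp_of x []"
    by (blast dest: lstep_step)
  then have "abs_qexp x = abs_qexp (subst g' k v)"
    using abs_qexp_eq_if_lexp_of_eq[OF x(2)] by simp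
  with x(1) show ?thesis by blast
qed

lemma step_subst_out:
  assumes "out g v" "step k a y"
  shows "\<exists>x. step (subst g k v) a x \<and> abs_qexp x = abs_qexp y"
proof -
  have "v \<in> lout (lexp_of g [])"
    using assms(1) by (simp add: out_iff_lout)
  then have "lstep (lexp_of (subst g k v) []) a (lexp_of y [])"
    unfolding lexp_of_subst_Nil using step_lstep[OF assms(2)] lclosed_lexp_of_Nil by (rule lstep_lsubst_out)
  then obtain x where x: "step (subst g k v) a x" "lexp_of y [] = lexp_of x []"
    by (blast dest: lstep_step)
  then have "abs_qexp x = abs_qexp y"
    using abs_qexp_eq_if_lexp_of_eq[OF x(2)] by simp
  with x(1) show ?thesis by blast
qed

lemma out_subst: "out (subst g k v) w \<longleftrightarrow> (out g w \<and> w \<noteq> v) \<or> (out g v \<and> out k w)"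
  by (simp add: out_iff_lout lexp_of_subst_Nil lout_lsubst)

lemma bisim_stepD: "bisim x y \<Longrightarrow> step x a x' \<Longrightarrow> \<exists>y'. step y a y' \<and> bisim x' y'"
  unfolding bisim_def bisimulation_def by blast

lemma bisim_outD: "bisim x y \<Longrightarrow> out x v \<longleftrightarrow> out y v"
  unfolding bisim_def bisimulation_def by blast

lemma bisim_transitions_subset:
  assumes "bisim r x"
  shows "{Inl (a, abs_qexp r') | a r'. step r a r'} \<subseteq> {Inl (a, abs_qexp x') | a x'. step x a x'}"
proof
  fix p
  assume "p \<in> {Inl (a, abs_qexp r') | a r'. step r a r'}"
  then obtain a r' where p: "p = Inl (a, abs_qexp r')" "step r a r'" by blast
  then obtain x' where x': "step x a x'" "bisim r' x'"
    using bisim_stepD[OF assms] by blast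
  then have "abs_qexp r' = abs_qexp x'" by (simp add: qexp.abs_eq_iff)
  then show "p \<in> {Inl (a, abs_qexp x') | a x'. step x a x'}"
    using p(1) x'(1) by blast
qed

lemma beta_abs_qexp:
  "beta (abs_qexp x) = {Inl (a, abs_qexp x') | a x'. step x a x'} \<union> {Inr w | w. out x w}"
proof -
  define r where "r = rep_qexp (abs_qexp x)"
  have rx: "bisim r x"
    unfolding r_def by (rule Quotient3_rep_abs[OF Quotient3_qexp equivp_reflp[OF equivp_bisim]])
  then have "bisim x r"
    using equivp_symp[OF equivp_bisim] by blast
  then have "{Inl (a, abs_qexp r') | a r'. step r a r'} =
    ({Inl (a, abs_qexp x') | a x'. step x a x'} :: ('a \<times> 'a qexp + nat) set)"
    using bisim_transitions_subset[OF rx] bisim_transitions_subset by blast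
  moreover have "{Inr v | v. out r v} = ({Inr w | w. out x w} :: ('a \<times> 'a qexp + nat) set)"
    using bisim_outD[OF rx] by simp
  ultimately show ?thesis
    unfolding beta_def r_def[symmetric] by (simp only:)
qed

section \<open>Directed Hausdorff distance\<close>

definition unit_valued :: "('x \<Rightarrow> 'y \<Rightarrow> real) \<Rightarrow> bool" where
  "unit_valued r \<longleftrightarrow> (\<forall>x y. 0 \<le> r x y \<and> r x y \<le> 1)"

lemma unit_valuedD: "unit_valued r \<Longrightarrow> 0 \<le> r x y" "unit_valued r \<Longrightarrow> r x y \<le> 1"
  unfolding unit_valued_def by auto

lemma infz_lower:
  assumes "y \<in> B" "\<And>y. y \<in> B \<Longrightarrow> 0 \<le> f y"
  shows "infz (f ` B) \<le> f y"
proof -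
  have "bdd_below (f ` B)"
    using assms(2) by (intro bdd_belowI[of _ 0]) auto
  then show ?thesis
    using assms(1) by (auto simp: infz_def intro: cInf_lower)
qed

lemma infz_greatest: "(\<And>y. y \<in> B \<Longrightarrow> c \<le> f y) \<Longrightarrow> c \<le> 1 \<Longrightarrow> c \<le> infz (f ` B)"
  unfolding infz_def by (auto intro: cInf_greatest)

lemma infz_less:
  assumes "infz (f ` B) < t" "t \<le> 1"
  shows "\<exists>y\<in>B. f y < t"
proof -
  have "B \<noteq> {}"
    using assms by (auto simp: infz_def)
  then show ?thesis
    using assms(1) cInf_lessD[of "f ` B" t] by (simp add: infz_def)
qed

lemma infz_bounds:
  "(\<And>y. y \<in> B \<Longrightarrow> 0 \<le> f y \<and> f y \<le> 1) \<Longrightarrow> 0 \<le> infz (f ` B) \<and> infz (f ` B) \<le> 1"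
  by (cases "B = {}") (auto simp: infz_greatest infz_def[of "{}"] intro: order_trans[OF infz_lower])

lemma supz_least: "(\<And>x. x \<in> A \<Longrightarrow> f x \<le> M) \<Longrightarrow> 0 \<le> M \<Longrightarrow> supz (f ` A) \<le> M"
  unfolding supz_def by (auto intro: cSup_least)

lemma supz_upper:
  assumes "x \<in> A" "\<And>x. x \<in> A \<Longrightarrow> f x \<le> 1"
  shows "f x \<le> supz (f ` A)"
proof -
  have "bdd_above (f ` A)"
    using assms(2) by (intro bdd_aboveI[of _ 1]) auto
  then show ?thesis
    using assms(1) by (auto simp: supz_def intro: cSup_upper)
qed

lemma supz_bounds:
  "(\<And>x. x \<in> A \<Longrightarrow> 0 \<le> f x \<and> f x \<le> 1) \<Longrightarrow> 0 \<le> supz (f ` A) \<and> supz (f ` A) \<le> 1"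
  by (cases "A = {}") (auto simp: supz_least supz_def[of "{}"] intro: order_trans[OF _ supz_upper])

definition directed_hausdorff :: "('y \<Rightarrow> 'y \<Rightarrow> real) \<Rightarrow> 'y set \<Rightarrow> 'y set \<Rightarrow> real" where
  "directed_hausdorff r A B = supz ((\<lambda>x. infz (r x ` B)) ` A)"

lemma hausdorff_directed:
  "hausdorff r A B = max (directed_hausdorff r A B) (directed_hausdorff r B A)"
  unfolding hausdorff_def directed_hausdorff_def by simp

lemma infz_image_bounds: "unit_valued r \<Longrightarrow> 0 \<le> infz (r x ` B) \<and> infz (r x ` B) \<le> 1"
  by (rule infz_bounds) (auto simp: unit_valued_def)

lemma infz_le_directed_hausdorff:
  "unit_valued r \<Longrightarrow> x \<in> A \<Longrightarrow> infz (r x ` B) \<le> directed_hausdorff r A B"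
  unfolding directed_hausdorff_def by (rule supz_upper) (auto dest: infz_image_bounds)

lemma directed_hausdorff_least:
  "(\<And>x. x \<in> A \<Longrightarrow> infz (r x ` B) \<le> M) \<Longrightarrow> 0 \<le> M \<Longrightarrow> directed_hausdorff r A B \<le> M"
  unfolding directed_hausdorff_def by (rule supz_least)

lemma directed_hausdorff_bounds:
  "unit_valued r \<Longrightarrow> 0 \<le> directed_hausdorff r A B \<and> directed_hausdorff r A B \<le> 1"
  unfolding directed_hausdorff_def by (intro supz_bounds infz_image_bounds)

lemma hausdorff_bounds: "unit_valued r \<Longrightarrow> 0 \<le> hausdorff r A B \<and> hausdorff r A B \<le> 1"
  using directed_hausdorff_bounds[of r A B] directed_hausdorff_bounds[of r B A]
  by (auto simp: hausdorff_directed)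

lemma directed_hausdorff_shift:
  assumes "unit_valued r" "unit_valued r'" "\<And>x y. r x y \<le> r' x y + c" "0 \<le> c"
  shows "directed_hausdorff r A B \<le> directed_hausdorff r' A B + c"
proof (rule directed_hausdorff_least)
  fix x
  assume x: "x \<in> A"
  have "infz (r x ` B) - c \<le> infz (r' x ` B)"
  proof (rule infz_greatest)
    fix y
    assume "y \<in> B"
    then have "infz (r x ` B) \<le> r x y"
      using unit_valuedD(1)[OF assms(1)] by (rule infz_lower)
    then show "infz (r x ` B) - c \<le> r' x y"
      using assms(3)[of x y] by simp
  qed (use infz_image_bounds[OF assms(1), of x B] assms(4) in linarith)
  also have "\<dots> \<le> directed_hausdorff r' A B"
    using assms(2) x by (rule infz_le_directed_hausdorff)
  finally show "infz (r x ` B) \<le> directed_hausdorff r' A B + c" by simp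
qed (use directed_hausdorff_bounds[OF assms(2), of A B] assms(4) in simp)

lemma hausdorff_shift:
  assumes "unit_valued r" "unit_valued r'" "\<And>x y. r x y \<le> r' x y + c" "0 \<le> c"
  shows "hausdorff r A B \<le> hausdorff r' A B + c"
  using directed_hausdorff_shift[OF assms, of A B] directed_hausdorff_shift[OF assms, of B A]
  by (auto simp: hausdorff_directed max_def)

lemma directed_hausdorff_self:
  assumes r: "unit_valued r" and refl: "\<And>x. r x x = 0"
  shows "directed_hausdorff r A A = 0"
proof -
  have "directed_hausdorff r A A \<le> 0"
  proof (rule directed_hausdorff_least)
    fix x
    assume "x \<in> A"
    then show "infz (r x ` A) \<le> 0"
      using infz_lower[of x A "r x"] unit_valuedD(1)[OF r] refl by auto
  qed simp
  then show ?thesis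
    using directed_hausdorff_bounds[OF r, of A A] by simp
qed

lemma infz_triangle:
  assumes "unit_valued r" "\<And>x y z. r x z \<le> r x y + r y z"
  shows "infz (r x ` C) \<le> r x y + infz (r y ` C)"
proof (cases "C = {}")
  case True
  then show ?thesis using unit_valuedD(1)[OF assms(1)] by (simp add: infz_def)
next
  case False
  have "infz (r x ` C) - r x y \<le> infz (r y ` C)"
  proof (rule infz_greatest)
    fix z
    assume "z \<in> C"
    then have "infz (r x ` C) \<le> r x z"
      using unit_valuedD(1)[OF assms(1)] by (rule infz_lower)
    then show "infz (r x ` C) - r x y \<le> r y z"
      using assms(2)[of x z y] by simp
  qed (use infz_image_bounds[OF assms(1), of x C] unit_valuedD(1)[OF assms(1), of x y] in linarith)
  then show ?thesis by simp
qed

lemma directed_hausdorff_triangle: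
  assumes r: "unit_valued r" and tri: "\<And>x y z. r x z \<le> r x y + r y z"
  shows "directed_hausdorff r A C \<le> directed_hausdorff r A B + directed_hausdorff r B C"
proof (rule directed_hausdorff_least)
  fix x
  assume x: "x \<in> A"
  have "infz (r x ` C) - directed_hausdorff r B C \<le> infz (r x ` B)"
  proof (rule infz_greatest)
    fix y
    assume "y \<in> B"
    then have "infz (r y ` C) \<le> directed_hausdorff r B C"
      using r by (intro infz_le_directed_hausdorff)
    then show "infz (r x ` C) - directed_hausdorff r B C \<le> r x y"
      using infz_triangle[OF r tri, of x C y] by simp
  qed (use infz_image_bounds[OF r, of x C] directed_hausdorff_bounds[OF r, of B C] in linarith)
  also have "\<dots> \<le> directed_hausdorff r A B"
    using r x by (rule infz_le_directed_hausdorff)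
  finally show "infz (r x ` C) \<le> directed_hausdorff r A B + directed_hausdorff r B C" by simp
qed (use directed_hausdorff_bounds[OF r, of A B] directed_hausdorff_bounds[OF r, of B C] in linarith)

lemma hausdorff_triangle:
  assumes "unit_valued r" "\<And>x y z. r x z \<le> r x y + r y z"
  shows "hausdorff r A C \<le> hausdorff r A B + hausdorff r B C"
  using directed_hausdorff_triangle[OF assms, where A = A and B = B and C = C]
    directed_hausdorff_triangle[OF assms, where A = C and B = B and C = A]
  by (auto simp: hausdorff_directed max_def)

section \<open>The behavioural distance as the fixed point of a contraction\<close>

lemma dup_unit_valued:
  assumes "unit_valued d"
  shows "unit_valued (dup d)"
proof -
  have "0 \<le> d x y" "d x y / 2 \<le> 1" for x y
    using unit_valuedD[OF assms, of x y] by auto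
  then have "0 \<le> dup d p q \<and> dup d p q \<le> 1" for p q
    by (induction d p q rule: dup.induct) auto
  then show ?thesis
    unfolding unit_valued_def by blast
qed

lemma dup_shift: "(\<And>x y. d x y \<le> d' x y + c) \<Longrightarrow> 0 \<le> c \<Longrightarrow> dup d p q \<le> dup d' p q + c / 2"
  by (induction d p q rule: dup.induct) (auto simp: add_divide_distrib[symmetric])

lemma dup_self: "(\<And>x. d x x = 0) \<Longrightarrow> dup d p p = 0"
  by (cases p) auto

lemma dup_triangle:
  assumes d: "unit_valued d" and tri: "\<And>x y z. d x z \<le> d x y + d y z"
  shows "dup d p r \<le> dup d p q + dup d q r"
proof -
  have "0 \<le> dup d p q" "0 \<le> dup d q r" "dup d p r \<le> 1"
    using unit_valuedD[OF dup_unit_valued[OF d]] by auto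
  moreover have "d x y / 2 \<le> d x z / 2 + d z y / 2" for x y z
    using tri[of x y z] by simp
  ultimately show ?thesis
    by (induction d p r rule: dup.induct; cases q) auto
qed

lemma Phi_unit_valued: "unit_valued d \<Longrightarrow> unit_valued (Phi d)"
  unfolding unit_valued_def[of "Phi d"] Phi_def using hausdorff_bounds[OF dup_unit_valued] by blast

lemma Phi_shift:
  "unit_valued d \<Longrightarrow> unit_valued d' \<Longrightarrow> (\<And>x y. d x y \<le> d' x y + c) \<Longrightarrow> 0 \<le> c \<Longrightarrow>
   Phi d x y \<le> Phi d' x y + c / 2"
  unfolding Phi_def by (rule hausdorff_shift) (auto intro: dup_unit_valued dup_shift)

lemma Phi_mono:
  "unit_valued d \<Longrightarrow> unit_valued d' \<Longrightarrow> (\<And>x y. d x y \<le> d' x y) \<Longrightarrow> Phi d x y \<le> Phi d' x y"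
  using Phi_shift[of d d' 0 x y] by simp

lemma pseudometric_unit_valued: "pseudometric d \<Longrightarrow> unit_valued d"
  unfolding pseudometric_def unit_valued_def by blast

lemma Phi_pseudometric:
  assumes "pseudometric d"
  shows "pseudometric (Phi d)"
proof -
  have d: "unit_valued d"
    using assms by (rule pseudometric_unit_valued)
  have refl: "\<And>x. d x x = 0" and tri: "\<And>x y z. d x z \<le> d x y + d y z"
    using assms by (auto simp: pseudometric_def)
  have "\<And>x. Phi d x x = 0"
    unfolding Phi_def hausdorff_directed
    using directed_hausdorff_self[OF dup_unit_valued[OF d] dup_self[OF refl]] by simp
  moreover have "\<And>x y. Phi d x y = Phi d y x"
    unfolding Phi_def hausdorff_directed by (simp add: max.commute)
  moreover have "\<And>x y z. Phi d x z \<le> Phi d x y + Phi d y z"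
    unfolding Phi_def by (rule hausdorff_triangle[OF dup_unit_valued[OF d] dup_triangle[OF d tri]])
  ultimately show ?thesis
    using Phi_unit_valued[OF d] unfolding pseudometric_def unit_valued_def by blast
qed

lemma le_if_le_plus_half_pow: "(\<And>n. (a::real) \<le> b + (1/2) ^ n) \<Longrightarrow> a \<le> b"
proof (rule ccontr)
  assume le: "\<And>n. a \<le> b + (1/2) ^ n" and "\<not> a \<le> b"
  then obtain n where "(1/2::real) ^ n < a - b"
    using real_arch_pow_inv[of "a - b" "1/2"] by auto
  with le[of n] show False by simp
qed

lemma Phi_postfp_le_prefp:
  assumes A: "unit_valued A" and B: "unit_valued B"
    and post: "\<And>x y. A x y \<le> Phi A x y" and pre: "\<And>x y. Phi B x y \<le> B x y"
  shows "A x y \<le> B x y"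
proof (rule le_if_le_plus_half_pow)
  fix n
  show "A x y \<le> B x y + (1/2) ^ n"
  proof (induction n arbitrary: x y)
    case 0
    then show ?case using unit_valuedD(2)[OF A] unit_valuedD(1)[OF B] by (simp add: add_increasing)
  next
    case (Suc n)
    have "A x y \<le> Phi A x y" by (rule post)
    also have "\<dots> \<le> Phi B x y + (1/2) ^ n / 2"
      by (rule Phi_shift[OF A B Suc.IH]) simp
    also have "\<dots> \<le> B x y + (1/2) ^ Suc n"
      using pre[of x y] by simp
    finally show ?case .
  qed
qed

definition Phi_iter :: "nat \<Rightarrow> 'a qexp \<Rightarrow> 'a qexp \<Rightarrow> real" where
  "Phi_iter n = (Phi ^^ n) (\<lambda>_ _. 0)"

lemma Phi_iter_0: "Phi_iter 0 = (\<lambda>_ _. 0)"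
  by (simp add: Phi_iter_def)

lemma Phi_iter_Suc: "Phi_iter (Suc n) = Phi (Phi_iter n)"
  by (simp add: Phi_iter_def)

lemma Phi_iter_pseudometric: "pseudometric (Phi_iter n)"
proof (induction n)
  case 0
  then show ?case by (simp add: Phi_iter_0 pseudometric_def)
next
  case (Suc n)
  then show ?case by (simp add: Phi_iter_Suc Phi_pseudometric)
qed

lemma Phi_iter_unit_valued: "unit_valued (Phi_iter n)"
  by (rule pseudometric_unit_valued[OF Phi_iter_pseudometric])

lemma Phi_iter_le_Suc: "Phi_iter n x y \<le> Phi_iter (Suc n) x y"
proof (induction n arbitrary: x y)
  case 0
  then show ?case
    using unit_valuedD(1)[OF Phi_iter_unit_valued] by (simp add: Phi_iter_0)
next
  case (Suc n)
  have "Phi (Phi_iter n) x y \<le> Phi (Phi_iter (Suc n)) x y"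
    by (rule Phi_mono[OF Phi_iter_unit_valued Phi_iter_unit_valued Suc.IH])
  then show ?case by (simp add: Phi_iter_Suc)
qed

lemma Phi_iter_mono: "n \<le> m \<Longrightarrow> Phi_iter n x y \<le> Phi_iter m x y"
  using lift_Suc_mono_le[of "\<lambda>n. Phi_iter n x y"] Phi_iter_le_Suc by blast

lemma Phi_iter_close: "Phi_iter (m + n) x y \<le> Phi_iter n x y + (1/2) ^ n"
proof (induction n arbitrary: x y)
  case 0
  then show ?case using unit_valuedD(2)[OF Phi_iter_unit_valued] by (simp add: Phi_iter_0)
next
  case (Suc n)
  have "Phi (Phi_iter (m + n)) x y \<le> Phi (Phi_iter n) x y + (1/2) ^ n / 2"
    by (rule Phi_shift[OF Phi_iter_unit_valued Phi_iter_unit_valued Suc.IH]) simp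
  then show ?case by (simp add: Phi_iter_Suc)
qed

definition Phi_lim :: "'a qexp \<Rightarrow> 'a qexp \<Rightarrow> real" where
  "Phi_lim x y = (SUP n. Phi_iter n x y)"

lemma Phi_iter_le_Phi_lim: "Phi_iter n x y \<le> Phi_lim x y"
  unfolding Phi_lim_def
  by (rule cSUP_upper) (auto intro: bdd_aboveI[of _ 1] unit_valuedD(2)[OF Phi_iter_unit_valued])

lemma Phi_lim_le_Phi_iter: "Phi_lim x y \<le> Phi_iter n x y + (1/2) ^ n"
  unfolding Phi_lim_def
proof (rule cSUP_least)
  fix m
  have "Phi_iter m x y \<le> Phi_iter (m + n) x y" by (rule Phi_iter_mono) simp
  also have "\<dots> \<le> Phi_iter n x y + (1/2) ^ n" by (rule Phi_iter_close)
  finally show "Phi_iter m x y \<le> Phi_iter n x y + (1/2) ^ n" .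
qed simp

lemma Phi_lim_pseudometric: "pseudometric Phi_lim"
proof -
  have iter: "0 \<le> Phi_iter n x y" "Phi_iter n x y \<le> 1" "Phi_iter n x x = 0"
    "Phi_iter n x y = Phi_iter n y x" "Phi_iter n x z \<le> Phi_iter n x y + Phi_iter n y z" for n x y z
    using Phi_iter_pseudometric[of n] unfolding pseudometric_def by blast+
  have nonneg: "0 \<le> Phi_lim x y" for x y
    using Phi_iter_le_Phi_lim[of 0 x y] by (simp add: Phi_iter_0)
  moreover have "Phi_lim x y \<le> 1" for x y
    unfolding Phi_lim_def by (rule cSUP_least) (simp_all add: iter(2))
  moreover have "Phi_lim x x = 0" for x
  proof -
    have "Phi_lim x x \<le> 0"
      by (rule le_if_le_plus_half_pow) (use Phi_lim_le_Phi_iter[of x x] in \<open>simp add: iter(3)\<close>)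
    then show ?thesis using nonneg[of x x] by simp
  qed
  moreover have "Phi_lim x y = Phi_lim y x" for x y
    unfolding Phi_lim_def using iter(4) by metis
  moreover have "Phi_lim x z \<le> Phi_lim x y + Phi_lim y z" for x y z
  proof (rule le_if_le_plus_half_pow)
    fix n
    have "Phi_lim x z \<le> Phi_iter n x z + (1/2) ^ n" by (rule Phi_lim_le_Phi_iter)
    also have "\<dots> \<le> Phi_iter n x y + Phi_iter n y z + (1/2) ^ n" using iter(5) by simp
    finally show "Phi_lim x z \<le> Phi_lim x y + Phi_lim y z + (1/2) ^ n"
      using Phi_iter_le_Phi_lim[of n x y] Phi_iter_le_Phi_lim[of n y z] by simp
  qed
  ultimately show ?thesis
    unfolding pseudometric_def by blast
qed

lemma Phi_lim_fixpoint: "Phi Phi_lim = Phi_lim"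
proof (intro ext antisym)
  fix x y
  have lim: "unit_valued Phi_lim"
    by (rule pseudometric_unit_valued[OF Phi_lim_pseudometric])
  show "Phi Phi_lim x y \<le> Phi_lim x y"
  proof (rule le_if_le_plus_half_pow)
    fix n
    have "Phi Phi_lim x y \<le> Phi (Phi_iter n) x y + (1/2) ^ n / 2"
      by (rule Phi_shift[OF lim Phi_iter_unit_valued Phi_lim_le_Phi_iter]) simp
    also have "Phi (Phi_iter n) x y \<le> Phi_lim x y"
      using Phi_iter_le_Phi_lim[of "Suc n" x y] by (simp add: Phi_iter_Suc)
    finally show "Phi Phi_lim x y \<le> Phi_lim x y + (1/2) ^ n"
      using zero_le_power[of "1/2::real" n] by linarith
  qed
  show "Phi_lim x y \<le> Phi Phi_lim x y"
  proof (rule le_if_le_plus_half_pow)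
    fix n
    have "Phi_lim x y \<le> Phi_iter (Suc n) x y + (1/2) ^ Suc n" by (rule Phi_lim_le_Phi_iter)
    moreover have "Phi_iter (Suc n) x y \<le> Phi Phi_lim x y"
      unfolding Phi_iter_Suc by (rule Phi_mono[OF Phi_iter_unit_valued lim Phi_iter_le_Phi_lim])
    moreover have "(1/2::real) ^ Suc n \<le> (1/2) ^ n" by simp
    ultimately show "Phi_lim x y \<le> Phi Phi_lim x y + (1/2) ^ n" by linarith
  qed
qed

lemma bd_eq_Phi_lim: "bd = Phi_lim"
  unfolding bd_def
proof (rule the_equality)
  have least: "Phi_lim \<le> d" if "pseudometric d" "Phi d = d" for d
  proof (intro le_funI)
    fix x y
    show "Phi_lim x y \<le> d x y"
      by (rule Phi_postfp_le_prefp[OF pseudometric_unit_valued[OF Phi_lim_pseudometric]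
            pseudometric_unit_valued[OF that(1)]]) (simp_all add: Phi_lim_fixpoint that(2))
  qed
  then show "pseudometric Phi_lim \<and> Phi Phi_lim = Phi_lim \<and>
      (\<forall>d. pseudometric d \<and> Phi d = d \<longrightarrow> Phi_lim \<le> d)"
    using Phi_lim_pseudometric Phi_lim_fixpoint by blast
  fix d
  assume "pseudometric d \<and> Phi d = d \<and> (\<forall>d'. pseudometric d' \<and> Phi d' = d' \<longrightarrow> d \<le> d')"
  then show "d = Phi_lim"
    using least Phi_lim_pseudometric Phi_lim_fixpoint by (blast intro: antisym)
qed

lemma bd_pseudometric: "pseudometric bd"
  unfolding bd_eq_Phi_lim by (rule Phi_lim_pseudometric)

lemma bd_fixpoint: "Phi bd x y = bd x y"
  unfolding bd_eq_Phi_lim by (simp add: Phi_lim_fixpoint)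

lemma bd_unit_valued: "unit_valued bd"
  by (rule pseudometric_unit_valued[OF bd_pseudometric])

lemma bd_nonneg: "0 \<le> bd x y"
  by (rule unit_valuedD(1)[OF bd_unit_valued])

lemma bd_self: "bd x x = 0" and bd_sym: "bd x y = bd y x"
  using bd_pseudometric unfolding pseudometric_def by blast+


section \<open>Unfoldings with close components are close\<close>

lemma infz_beta_le_bd: "p \<in> beta x \<Longrightarrow> infz (dup bd p ` beta y) \<le> bd x y"
  using infz_le_directed_hausdorff[OF dup_unit_valued[OF bd_unit_valued], of p "beta x" "beta y"]
  by (simp add: bd_fixpoint[of x y, symmetric] Phi_def hausdorff_directed)

lemma bd_step_match:
  assumes "bd (abs_qexp x) (abs_qexp y) < t" "t \<le> 1" "step x a x'"
  shows "\<exists>y'. step y a y' \<and> bd (abs_qexp x') (abs_qexp y') / 2 < t"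
proof -
  have p: "Inl (a, abs_qexp x') \<in> beta (abs_qexp x)"
    using assms(3) by (auto simp: beta_abs_qexp)
  have "infz (dup bd (Inl (a, abs_qexp x')) ` beta (abs_qexp y)) < t"
    using infz_beta_le_bd[OF p, of "abs_qexp y"] assms(1) by linarith
  then obtain q where q: "q \<in> beta (abs_qexp y)" "dup bd (Inl (a, abs_qexp x')) q < t"
    using infz_less assms(2) by blast
  with assms(2) show ?thesis
    by (auto simp: beta_abs_qexp split: if_splits)
qed

lemma bd_less_1_out:
  assumes "bd (abs_qexp x) (abs_qexp y) < 1" "out x w"
  shows "out y w"
proof -
  have p: "Inr w \<in> beta (abs_qexp x)"
    using assms(2) by (auto simp: beta_abs_qexp)
  have "infz (dup bd (Inr w) ` beta (abs_qexp y)) < 1"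
    using infz_beta_le_bd[OF p, of "abs_qexp y"] assms(1) by linarith
  then obtain q where q: "q \<in> beta (abs_qexp y)" "dup bd (Inr w) q < 1"
    using infz_less by blast
  then show ?thesis
    by (auto simp: beta_abs_qexp split: if_splits)
qed

definition subst_mu_bounds :: "'a qexp \<Rightarrow> 'a qexp \<Rightarrow> real set" where
  "subst_mu_bounds X Y =
     {max (bd (abs_qexp g) (abs_qexp h)) (bd (abs_qexp e) (abs_qexp f)) | g h e f v.
        X = abs_qexp (subst g (Mu v e) v) \<and> Y = abs_qexp (subst h (Mu v f) v)}"

definition bd_upto :: "'a qexp \<Rightarrow> 'a qexp \<Rightarrow> real" where
  "bd_upto X Y = min (bd X Y) (infz (subst_mu_bounds X Y))"

lemma bd_upto_le_bd: "bd_upto X Y \<le> bd X Y"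
  unfolding bd_upto_def by simp

lemma subst_mu_bounds_nonneg: "s \<in> subst_mu_bounds X Y \<Longrightarrow> 0 \<le> s"
  unfolding subst_mu_bounds_def using bd_nonneg by (auto simp: le_max_iff_disj)

lemma bd_upto_unit_valued: "unit_valued bd_upto"
proof -
  have "0 \<le> infz ((\<lambda>s. s) ` subst_mu_bounds X Y)" for X Y
    by (rule infz_greatest) (auto intro: subst_mu_bounds_nonneg)
  then show ?thesis
    using unit_valuedD[OF bd_unit_valued] bd_upto_le_bd
    unfolding unit_valued_def bd_upto_def by (auto simp: min_le_iff_disj)
qed

lemma bd_upto_subst_mu:
  "bd_upto (abs_qexp (subst g (Mu v e) v)) (abs_qexp (subst h (Mu v f) v)) \<le>
   max (bd (abs_qexp g) (abs_qexp h)) (bd (abs_qexp e) (abs_qexp f))"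
proof -
  have "max (bd (abs_qexp g) (abs_qexp h)) (bd (abs_qexp e) (abs_qexp f)) \<in>
      subst_mu_bounds (abs_qexp (subst g (Mu v e) v)) (abs_qexp (subst h (Mu v f) v))"
    unfolding subst_mu_bounds_def by blast
  then have "infz ((\<lambda>s. s) ` subst_mu_bounds (abs_qexp (subst g (Mu v e) v)) (abs_qexp (subst h (Mu v f) v)))
      \<le> max (bd (abs_qexp g) (abs_qexp h)) (bd (abs_qexp e) (abs_qexp f))"
    by (rule infz_lower) (rule subst_mu_bounds_nonneg)
  then show ?thesis
    unfolding bd_upto_def by simp
qed

lemma bd_upto_subst_mu_half_less:
  assumes "bd (abs_qexp g) (abs_qexp h) / 2 < t" "bd (abs_qexp e) (abs_qexp f) < t"
  shows "bd_upto (abs_qexp (subst g (Mu v e) v)) (abs_qexp (subst h (Mu v f) v)) / 2 < t"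
  using bd_upto_subst_mu[of g v e h f] assms bd_nonneg[of "abs_qexp e" "abs_qexp f"]
  by (auto simp: max_def split: if_splits)

lemma step_subst_mu_match:
  assumes gh: "bd (abs_qexp g) (abs_qexp h) < t" and ef: "bd (abs_qexp e) (abs_qexp f) < t"
    and "t \<le> 1" and step: "step (subst g (Mu v e) v) a x"
  shows "\<exists>y. step (subst h (Mu v f) v) a y \<and> bd_upto (abs_qexp x) (abs_qexp y) / 2 < t"
proof -
  from step_substD[OF step] consider
      (left) g' where "step g a g'" "abs_qexp x = abs_qexp (subst g' (Mu v e) v)"
    | (unfold) x' where "out g v" "step (Mu v e) a x'" "abs_qexp x = abs_qexp x'"
    by blast
  then show ?thesis
  proof cases
    case left
    obtain h' where h': "step h a h'" "bd (abs_qexp g') (abs_qexp h') / 2 < t"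
      using bd_step_match[OF gh \<open>t \<le> 1\<close> left(1)] by blast
    obtain y where y: "step (subst h (Mu v f) v) a y" "abs_qexp y = abs_qexp (subst h' (Mu v f) v)"
      using step_subst[OF h'(1)] by blast
    have "bd_upto (abs_qexp x) (abs_qexp y) / 2 < t"
      using bd_upto_subst_mu_half_less[OF h'(2) ef] left(2) y(2) by simp
    with y(1) show ?thesis by blast
  next
    case unfold
    obtain e' where e': "x' = subst e' (Mu v e) v" "step e a e'"
      using unfold(2) by (rule step_MuE)
    obtain f' where f': "step f a f'" "bd (abs_qexp e') (abs_qexp f') / 2 < t"
      using bd_step_match[OF ef \<open>t \<le> 1\<close> e'(2)] by blast
    have "out h v"
      using bd_less_1_out[OF _ unfold(1)] gh \<open>t \<le> 1\<close> by simp
    moreover have "step (Mu v f) a (subst f' (Mu v f) v)"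
      using f'(1) by (rule step.intros(4))
    ultimately obtain y where
      y: "step (subst h (Mu v f) v) a y" "abs_qexp y = abs_qexp (subst f' (Mu v f) v)"
      by (blast dest: step_subst_out)
    have "bd_upto (abs_qexp x) (abs_qexp y) / 2 < t"
      using bd_upto_subst_mu_half_less[OF f'(2) ef] unfold(3) e'(1) y(2) by simp
    with y(1) show ?thesis by blast
  qed
qed

lemma out_subst_mu_transfer:
  assumes "bd (abs_qexp g) (abs_qexp h) < 1" "bd (abs_qexp e) (abs_qexp f) < 1"
    and "out (subst g (Mu v e) v) w"
  shows "out (subst h (Mu v f) v) w"
  using assms bd_less_1_out[OF assms(1)] bd_less_1_out[OF assms(2)] by (auto simp: out_subst)

lemma directed_hausdorff_subst_mu_le:
  fixes g h e f :: "'a exp"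
  defines "M \<equiv> max (bd (abs_qexp g) (abs_qexp h)) (bd (abs_qexp e) (abs_qexp f))"
  assumes "M < 1"
  shows "directed_hausdorff (dup bd_upto)
    (beta (abs_qexp (subst g (Mu v e) v))) (beta (abs_qexp (subst h (Mu v f) v))) \<le> M"
    (is "directed_hausdorff _ ?A ?B \<le> M")
proof (rule directed_hausdorff_least)
  show M: "0 \<le> M"
    unfolding M_def using bd_nonneg[of "abs_qexp g" "abs_qexp h"] by simp
  have dup_nonneg: "\<And>p q. 0 \<le> dup bd_upto p q"
    using unit_valuedD(1)[OF dup_unit_valued[OF bd_upto_unit_valued]] .
  fix p
  assume "p \<in> ?A"
  then consider (step) a x where "p = Inl (a, abs_qexp x)" "step (subst g (Mu v e) v) a x"
    | (out) w where "p = Inr w" "out (subst g (Mu v e) v) w"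
    by (auto simp: beta_abs_qexp)
  then show "infz (dup bd_upto p ` ?B) \<le> M"
  proof cases
    case step
    show ?thesis
    proof (rule dense_ge_bounded[OF \<open>M < 1\<close>])
      fix t
      assume "M < t" "t < 1"
      then obtain y where y: "step (subst h (Mu v f) v) a y" "bd_upto (abs_qexp x) (abs_qexp y) / 2 < t"
        using step_subst_mu_match[OF _ _ _ step(2)] unfolding M_def by fastforce
      then have "Inl (a, abs_qexp y) \<in> ?B"
        by (auto simp: beta_abs_qexp)
      then have "infz (dup bd_upto p ` ?B) \<le> dup bd_upto p (Inl (a, abs_qexp y))"
        using dup_nonneg by (rule infz_lower)
      then show "infz (dup bd_upto p ` ?B) \<le> t"
        using y(2) step(1) by simp
    qed
  next
    case out
    then have "Inr w \<in> ?B"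
      using out_subst_mu_transfer \<open>M < 1\<close> unfolding M_def by (auto simp: beta_abs_qexp)
    then have "infz (dup bd_upto p ` ?B) \<le> dup bd_upto p (Inr w)"
      using dup_nonneg by (rule infz_lower)
    then show ?thesis
      using out(1) M by simp
  qed
qed

lemma Phi_bd_upto_subst_mu_le:
  "Phi bd_upto (abs_qexp (subst g (Mu v e) v)) (abs_qexp (subst h (Mu v f) v)) \<le>
   max (bd (abs_qexp g) (abs_qexp h)) (bd (abs_qexp e) (abs_qexp f))"
proof (cases "max (bd (abs_qexp g) (abs_qexp h)) (bd (abs_qexp e) (abs_qexp f)) < 1")
  case True
  moreover have "max (bd (abs_qexp h) (abs_qexp g)) (bd (abs_qexp f) (abs_qexp e)) =
      max (bd (abs_qexp g) (abs_qexp h)) (bd (abs_qexp e) (abs_qexp f))"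
    by (simp add: bd_sym)
  ultimately show ?thesis
    using directed_hausdorff_subst_mu_le[of g h e f v] directed_hausdorff_subst_mu_le[of h g f e v]
    unfolding Phi_def hausdorff_directed by simp
next
  case False
  then show ?thesis
    using unit_valuedD(2)[OF Phi_unit_valued[OF bd_upto_unit_valued]] by (meson not_less order_trans)
qed

lemma Phi_bd_upto_le: "Phi bd_upto X Y \<le> bd_upto X Y"
proof -
  have "Phi bd_upto X Y \<le> bd X Y"
    using Phi_mono[OF bd_upto_unit_valued bd_unit_valued bd_upto_le_bd] bd_fixpoint by metis
  moreover have "Phi bd_upto X Y \<le> infz ((\<lambda>s. s) ` subst_mu_bounds X Y)"
  proof (rule infz_greatest)
    fix s
    assume "s \<in> subst_mu_bounds X Y"
    then show "Phi bd_upto X Y \<le> s"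
      unfolding subst_mu_bounds_def using Phi_bd_upto_subst_mu_le by blast
  qed (rule unit_valuedD(2)[OF Phi_unit_valued[OF bd_upto_unit_valued]])
  ultimately show ?thesis
    unfolding bd_upto_def by simp
qed

lemma bd_le_bd_upto: "bd X Y \<le> bd_upto X Y"
  by (rule Phi_postfp_le_prefp[OF bd_unit_valued bd_upto_unit_valued])
    (simp_all add: bd_fixpoint Phi_bd_upto_le)

theorem mainTheorem14:
  fixes e f :: "'a exp" and vx :: nat
  shows "bd (abs_qexp (Mu vx e)) (abs_qexp (Mu vx f)) \<le> bd (abs_qexp e) (abs_qexp f)"
proof -
  have "bd (abs_qexp (Mu vx e)) (abs_qexp (Mu vx f)) \<le> bd_upto (abs_qexp (Mu vx e)) (abs_qexp (Mu vx f))"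
    by (rule bd_le_bd_upto)
  also have "\<dots> \<le> max (bd (abs_qexp (Var vx :: 'a exp)) (abs_qexp (Var vx))) (bd (abs_qexp e) (abs_qexp f))"
    using bd_upto_subst_mu[of "Var vx" vx e "Var vx" f] by simp
  also have "\<dots> = bd (abs_qexp e) (abs_qexp f)"
    using bd_nonneg[of "abs_qexp e" "abs_qexp f"] by (simp add: bd_self)
  finally show ?thesis .
qed

end
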